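(* There is no symmetric $2$-$(36,15,6)$ design admitting an automorphism of order two that fixes exactly $18$ points, and there is no symmetric $2$-$(36,15,6)$ design admitting an automorphism of order two that fixes exactly $14$ points. *)

theory Defs
  imports Main "HOL-Library.Multiset"
begin

definition symmetric_design :: "'a set \<Rightarrow> 'a set multiset \<Rightarrow> nat \<Rightarrow> nat \<Rightarrow> nat \<Rightarrow> bool" where
  "symmetric_design P B v k lam \<longleftrightarrow>
     finite P \<and> card P = v \<and> size B = v \<and>
     (\<forall>b\<in>#B. b \<subseteq> P \<and> card b = k) \<and>
     (\<forall>x\<in>P. \<forall>y\<in>P. x \<noteq> y \<longrightarrow> size (filter_mset (\<lambda>b. x \<in> b \<and> y \<in> b) B) = lam)"

definition design_automorphism :: "'a set \<Rightarrow> 'a set multiset \<Rightarrow> ('a \<Rightarrow> 'a) \<Rightarrow> bool" where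
  "design_automorphism P B \<sigma> \<longleftrightarrow> bij_betw \<sigma> P P \<and> image_mset (\<lambda>b. \<sigma> ` b) B = B"

definition order_two_on :: "'a set \<Rightarrow> ('a \<Rightarrow> 'a) \<Rightarrow> bool" where
  "order_two_on P \<sigma> \<longleftrightarrow> (\<forall>x\<in>P. \<sigma> (\<sigma> x) = x) \<and> (\<exists>x\<in>P. \<sigma> x \<noteq> x)"

end

theory Submission
  imports Defs
begin

text \<open>For a point \<open>y\<close> let \<open>d\<^sub>y(B) = [y \<in> B] - [\<sigma> y \<in> B]\<close>, a vector indexed by the blocks.
  If \<open>y' \<notin> {y, \<sigma> y}\<close>, then \<open>d\<^sub>y \<cdot> d\<^sub>y' = lam - lam - lam + lam = 0\<close>, so the products
  \<open>d\<^sub>y(B) d\<^sub>y'(B)\<close> equal to \<open>1\<close> and to \<open>-1\<close> are equally many; and since \<open>\<sigma>\<close> permutes the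
  blocks and changes the sign of \<open>d\<^sub>y\<close>, the \<open>-1\<close> entries come in pairs \<open>B, \<sigma> B\<close>. Hence the
  number of blocks separating both \<open>y, \<sigma> y\<close> and \<open>y', \<sigma> y'\<close> is divisible by 4. Every moved
  point separates \<open>2(k - lam) = 18\<close> blocks, every moved block (which meets its image in
  \<open>lam\<close> points) separates 18 points, so moved points and moved blocks are equally many.
  With 18 fixed points, any two non-swapped moved points separate all 18 moved blocks,
  which is not a multiple of 4. With 14 fixed points there are 22 moved points, each
  failing to separate exactly 4 moved blocks; two such sets of 4 meet in exactly 2 blocks
  unless the points are swapped, and counting these intersections in two ways would give
  \<open>22 \<cdot> 48 = 22 \<cdot> 16\<close>.\<close>

lemma sum_card_filter_swap:
  assumes "finite A" "finite B"
  shows "(\<Sum>a\<in>A. card {b\<in>B. R a b}) = (\<Sum>b\<in>B. card {a\<in>A. R a b})"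
  by (rule sum_multicount_gen) (use assms in auto)

lemma sum_if_const_eq_card:
  "finite A \<Longrightarrow> (\<Sum>a\<in>A. if Q a then c else 0) = card {a\<in>A. Q a} * c"
  by (simp add: sum.inter_filter[symmetric])

lemma card_nonzero_eq_twice_card_neg:
  fixes g :: "'b \<Rightarrow> int"
  assumes "finite A" "\<forall>a\<in>A. g a \<in> {-1, 0, 1}" "sum g A = 0"
  shows "card {a\<in>A. g a \<noteq> 0} = 2 * card {a\<in>A. g a = -1}"
proof -
  let ?pos = "{a\<in>A. g a = 1}" and ?neg = "{a\<in>A. g a = -1}"
  have "sum g A = (\<Sum>a\<in>A. of_bool (g a = 1) - of_bool (g a = -1))"
    by (rule sum.cong) (use assms(2) in auto)
  also have "\<dots> = int (card ?pos) - int (card ?neg)"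
    using assms(1) by (simp add: sum_subtractf Int_def conj_commute)
  finally have "card ?pos = card ?neg" using assms(3) by simp
  moreover have "{a\<in>A. g a \<noteq> 0} = ?pos \<union> ?neg" using assms(2) by auto
  moreover have "card (?pos \<union> ?neg) = card ?pos + card ?neg"
    by (rule card_Un_disjoint) (use assms(1) in auto)
  ultimately show ?thesis by simp
qed

lemma even_size_mset_if_fixpoint_free_involution:
  assumes "image_mset g M = M" "\<forall>c\<in>#M. g c \<noteq> c" "\<forall>c\<in>#M. g (g c) = c"
  shows "even (size M)"
  using assms
proof (induction "size M" arbitrary: M rule: less_induct)
  case less
  show ?case
  proof (cases "M = {#}")
    case False
    then obtain c where c: "c \<in># M" by (meson multiset_nonemptyE)
    have "g c \<in># M" using c less.prems(1) by (metis image_eqI set_image_mset)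
    with c less.prems(2) obtain M' where M: "M = add_mset c (add_mset (g c) M')"
      by (metis insert_DiffM insert_noteq_member)
    have "image_mset g M' = M'"
      using less.prems(1) less.prems(3) c by (simp add: M add_mset_commute)
    moreover have "even (size M')"
      by (rule less.hyps) (use M less.prems calculation in auto)
    ultimately show ?thesis by (simp add: M)
  qed simp
qed

lemma sum_sum_card_inter_eq_sum_square:
  assumes "finite A" "finite B" "\<And>a. a \<in> A \<Longrightarrow> Z a \<subseteq> B"
  shows "(\<Sum>a\<in>A. \<Sum>a'\<in>A. card (Z a \<inter> Z a')) = (\<Sum>b\<in>B. (card {a\<in>A. b \<in> Z a})\<^sup>2)"
proof -
  have "(\<Sum>a\<in>A. \<Sum>a'\<in>A. card (Z a \<inter> Z a')) = (\<Sum>aa'\<in>A \<times> A. card {b\<in>B. b \<in> Z (fst aa') \<and> b \<in> Z (snd aa')})"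
    unfolding sum.cartesian_product
    by (rule sum.cong) (use assms(3) in \<open>auto intro!: arg_cong[where f = card]\<close>)
  also have "\<dots> = (\<Sum>b\<in>B. card {aa'\<in>A \<times> A. b \<in> Z (fst aa') \<and> b \<in> Z (snd aa')})"
    by (rule sum_card_filter_swap) (use assms in auto)
  also have "\<dots> = (\<Sum>b\<in>B. card ({a\<in>A. b \<in> Z a} \<times> {a\<in>A. b \<in> Z a}))"
    by (rule sum.cong) (auto intro!: arg_cong[where f = card])
  finally show ?thesis by (simp add: card_cartesian_product power2_eq_square)
qed

text \<open>The blocks are listed with multiplicity, so that a block is referred to by its index.\<close>

locale indexed_symmetric_design =
  fixes P :: "'a set" and bs :: "'a set list" and v k lam :: nat
  assumes finite_points: "finite P"
    and card_points: "card P = v"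
    and length_blocks: "length bs = v"
    and block_subset: "i < v \<Longrightarrow> bs!i \<subseteq> P"
    and card_block: "i < v \<Longrightarrow> card (bs!i) = k"
    and pair_count: "x \<in> P \<Longrightarrow> y \<in> P \<Longrightarrow> x \<noteq> y \<Longrightarrow> card {i\<in>{..<v}. x \<in> bs!i \<and> y \<in> bs!i} = lam"
    and two_le_block_size: "2 \<le> k"
begin

lemma finite_block: "i < v \<Longrightarrow> finite (bs!i)"
  using block_subset finite_points finite_subset by blast

lemma replication_mult_eq:
  assumes x: "x \<in> P"
  shows "card {i\<in>{..<v}. x \<in> bs!i} * (k - 1) = lam * (v - 1)"
proof -
  have "lam * (v - 1) = (\<Sum>y\<in>P - {x}. lam)"
    using x finite_points card_points by simp
  also have "\<dots> = (\<Sum>y\<in>P - {x}. card {i\<in>{..<v}. x \<in> bs!i \<and> y \<in> bs!i})"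
    by (rule sum.cong) (use pair_count x in auto)
  also have "\<dots> = (\<Sum>i<v. card {y\<in>P - {x}. x \<in> bs!i \<and> y \<in> bs!i})"
    by (rule sum_card_filter_swap) (use finite_points in auto)
  also have "\<dots> = (\<Sum>i<v. if x \<in> bs!i then k - 1 else 0)"
  proof (rule sum.cong)
    fix i assume "i \<in> {..<v}"
    then have "{y\<in>P - {x}. x \<in> bs!i \<and> y \<in> bs!i} = (if x \<in> bs!i then bs!i - {x} else {})"
      using block_subset by auto
    then show "card {y\<in>P - {x}. x \<in> bs!i \<and> y \<in> bs!i} = (if x \<in> bs!i then k - 1 else 0)"
      using \<open>i \<in> {..<v}\<close> card_block finite_block by simp
  qed simp
  finally show ?thesis by (simp add: sum_if_const_eq_card)
qed

lemma replication_number: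
  assumes x: "x \<in> P"
  shows "card {i\<in>{..<v}. x \<in> bs!i} = k"
proof -
  let ?r = "\<lambda>y. card {i\<in>{..<v}. y \<in> bs!i}"
  have "?r y = ?r x" if "y \<in> P" for y
  proof -
    have "?r y * (k - 1) = ?r x * (k - 1)"
      using replication_mult_eq[OF that] replication_mult_eq[OF x] by simp
    then show ?thesis using two_le_block_size by simp
  qed
  then have "v * ?r x = (\<Sum>y\<in>P. ?r y)" using card_points by simp
  also have "\<dots> = (\<Sum>i<v. card {y\<in>P. y \<in> bs!i})"
    by (rule sum_card_filter_swap) (use finite_points in auto)
  also have "\<dots> = (\<Sum>i<v. k)"
    by (rule sum.cong) (use block_subset card_block in \<open>auto simp: Int_absorb1 Collect_conj_eq\<close>)
  finally have "v * ?r x = v * k" by simp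
  moreover have "v > 0" using x finite_points card_points card_gt_0_iff by blast
  ultimately show ?thesis by simp
qed

lemma parameter_identity:
  assumes "P \<noteq> {}"
  shows "k * (k - 1) = lam * (v - 1)"
  using assms replication_mult_eq replication_number by auto

lemma card_other_blocks_containing:
  assumes "x \<in> P" "i < v" "x \<in> bs!i"
  shows "card {j\<in>{..<v} - {i}. x \<in> bs!j} = k - 1"
proof -
  have "{j\<in>{..<v} - {i}. x \<in> bs!j} = {j\<in>{..<v}. x \<in> bs!j} - {i}" by auto
  then show ?thesis using assms replication_number by simp
qed

lemma card_other_blocks_containing_pair:
  assumes "x \<in> P" "y \<in> P" "x \<noteq> y" "i < v" "x \<in> bs!i" "y \<in> bs!i"
  shows "card {j\<in>{..<v} - {i}. x \<in> bs!j \<and> y \<in> bs!j} = lam - 1"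
proof -
  have "{j\<in>{..<v} - {i}. x \<in> bs!j \<and> y \<in> bs!j} = {j\<in>{..<v}. x \<in> bs!j \<and> y \<in> bs!j} - {i}"
    by auto
  then show ?thesis using assms pair_count by simp
qed

lemma sum_card_inter_other_blocks:
  assumes i: "i < v"
  shows "(\<Sum>j\<in>{..<v} - {i}. card (bs!i \<inter> bs!j)) = k * (k - 1)"
proof -
  let ?c = "bs!i" and ?J = "{..<v} - {i}"
  have "(\<Sum>j\<in>?J. card (?c \<inter> bs!j)) = (\<Sum>j\<in>?J. card {p\<in>?c. p \<in> bs!j})"
    by (simp add: Int_def)
  also have "\<dots> = (\<Sum>p\<in>?c. card {j\<in>?J. p \<in> bs!j})"
    by (rule sum_card_filter_swap[symmetric]) (use i finite_block in auto)
  also have "\<dots> = (\<Sum>p\<in>?c. k - 1)"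
    by (rule sum.cong) (use i block_subset card_other_blocks_containing in auto)
  finally show ?thesis using i card_block by simp
qed

lemma sum_card_inter_other_blocks_square:
  assumes i: "i < v"
  shows "(\<Sum>j\<in>{..<v} - {i}. (card (bs!i \<inter> bs!j))\<^sup>2) = k * (k - 1) * lam"
proof -
  let ?c = "bs!i" and ?J = "{..<v} - {i}"
  have c: "finite ?c" "?c \<subseteq> P" "card ?c = k" using i finite_block block_subset card_block by auto
  have "P \<noteq> {}" using c two_le_block_size by auto
  then have "k * (k - 1) = lam * (v - 1)" by (rule parameter_identity)
  then have "lam \<ge> 1" using two_le_block_size by (cases lam) auto
  have "(\<Sum>j\<in>?J. (card (?c \<inter> bs!j))\<^sup>2) = (\<Sum>j\<in>?J. card {pq\<in>?c \<times> ?c. fst pq \<in> bs!j \<and> snd pq \<in> bs!j})"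
  proof (rule sum.cong)
    fix j
    have "{pq\<in>?c \<times> ?c. fst pq \<in> bs!j \<and> snd pq \<in> bs!j} = (?c \<inter> bs!j) \<times> (?c \<inter> bs!j)" by auto
    then show "(card (?c \<inter> bs!j))\<^sup>2 = card {pq\<in>?c \<times> ?c. fst pq \<in> bs!j \<and> snd pq \<in> bs!j}"
      by (simp add: card_cartesian_product power2_eq_square)
  qed simp
  also have "\<dots> = (\<Sum>pq\<in>?c \<times> ?c. card {j\<in>?J. fst pq \<in> bs!j \<and> snd pq \<in> bs!j})"
    by (rule sum_card_filter_swap[symmetric]) (use c in auto)
  also have "\<dots> = (\<Sum>pq\<in>?c \<times> ?c. if fst pq = snd pq then k - 1 else lam - 1)"
  proof (rule sum.cong)
    fix pq assume "pq \<in> ?c \<times> ?c"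
    then have "fst pq \<in> ?c" "snd pq \<in> ?c" "fst pq \<in> P" "snd pq \<in> P" using c by auto
    then show "card {j\<in>?J. fst pq \<in> bs!j \<and> snd pq \<in> bs!j}
        = (if fst pq = snd pq then k - 1 else lam - 1)"
      using i card_other_blocks_containing card_other_blocks_containing_pair by auto
  qed simp
  also have "\<dots> = (\<Sum>p\<in>?c. \<Sum>q\<in>?c. if p = q then k - 1 else lam - 1)"
    by (simp add: sum.cartesian_product case_prod_beta)
  also have "\<dots> = (\<Sum>p\<in>?c. (k - 1) + (\<Sum>q\<in>?c - {p}. lam - 1))"
  proof (rule sum.cong)
    fix p assume "p \<in> ?c"
    then have "(\<Sum>q\<in>?c. if p = q then k - 1 else lam - 1)
        = (k - 1) + (\<Sum>q\<in>?c - {p}. if p = q then k - 1 else lam - 1)"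
      using c by (simp add: sum.remove)
    also have "\<dots> = (k - 1) + (\<Sum>q\<in>?c - {p}. lam - 1)"
      by (intro arg_cong2[where f = "(+)"] sum.cong) auto
    finally show "(\<Sum>q\<in>?c. if p = q then k - 1 else lam - 1) = (k - 1) + (\<Sum>q\<in>?c - {p}. lam - 1)" .
  qed simp
  also have "\<dots> = k * (k - 1) * lam"
    using c \<open>lam \<ge> 1\<close> by (cases lam) (simp_all add: mult.assoc mult_Suc_right distrib_left)
  finally show ?thesis .
qed

text \<open>The numbers \<open>|B\<^sub>i \<inter> B\<^sub>j|\<close>, \<open>j \<noteq> i\<close>, have mean \<open>lam\<close> and variance \<open>0\<close>.\<close>

lemma card_block_inter:
  assumes i: "i < v" and j: "j < v" and "i \<noteq> j"
  shows "card (bs!i \<inter> bs!j) = lam"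
proof -
  let ?J = "{..<v} - {i}" and ?x = "\<lambda>j. card (bs!i \<inter> bs!j)"
  have "P \<noteq> {}" using i block_subset card_block two_le_block_size by force
  then have "k * (k - 1) = lam * (v - 1)" by (rule parameter_identity)
  have "(\<Sum>j\<in>?J. (int (?x j) - int lam)\<^sup>2)
      = int (\<Sum>j\<in>?J. (?x j)\<^sup>2) - 2 * int lam * int (\<Sum>j\<in>?J. ?x j) + int lam ^ 2 * int (card ?J)"
    by (simp add: power2_diff sum.distrib sum_subtractf sum_distrib_left algebra_simps)
  also have "\<dots> = int lam * (int lam * int (v - 1) - int k * int (k - 1))"
    using i sum_card_inter_other_blocks sum_card_inter_other_blocks_square two_le_block_size
    by (simp add: algebra_simps power2_eq_square of_nat_diff)
  also have "\<dots> = 0"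
    using \<open>k * (k - 1) = lam * (v - 1)\<close> by (metis of_nat_mult diff_self mult_zero_right)
  finally have "\<forall>j\<in>?J. (int (?x j) - int lam)\<^sup>2 = 0"
    by (simp add: sum_nonneg_eq_0_iff)
  then show ?thesis using assms by simp
qed

end

locale indexed_design_involution = indexed_symmetric_design +
  fixes \<sigma> :: "'a \<Rightarrow> 'a"
  assumes involution_closed: "x \<in> P \<Longrightarrow> \<sigma> x \<in> P"
    and involution: "x \<in> P \<Longrightarrow> \<sigma> (\<sigma> x) = x"
    and automorphism: "image_mset ((`) \<sigma>) (mset bs) = mset bs"
begin

definition moved_points :: "'a set" where
  "moved_points = {x\<in>P. \<sigma> x \<noteq> x}"

definition moved_blocks :: "nat set" where
  "moved_blocks = {i\<in>{..<v}. \<sigma> ` (bs!i) \<noteq> bs!i}"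

definition separates :: "'a \<Rightarrow> 'a set \<Rightarrow> bool" where
  "separates y c \<longleftrightarrow> (y \<in> c) \<noteq> (\<sigma> y \<in> c)"

definition incidence_difference :: "'a \<Rightarrow> 'a set \<Rightarrow> int" where
  "incidence_difference y c = of_bool (y \<in> c) - of_bool (\<sigma> y \<in> c)"

lemma mem_image_iff:
  assumes "c \<subseteq> P" "y \<in> P"
  shows "y \<in> \<sigma> ` c \<longleftrightarrow> \<sigma> y \<in> c"
proof
  assume "y \<in> \<sigma> ` c"
  then obtain z where "z \<in> c" "y = \<sigma> z" by blast
  then show "\<sigma> y \<in> c" using assms(1) involution by auto
next
  assume "\<sigma> y \<in> c"
  then show "y \<in> \<sigma> ` c" using involution[OF assms(2)] by (metis image_eqI)
qed

lemma image_image_involution: "c \<subseteq> P \<Longrightarrow> \<sigma> ` \<sigma> ` c = c"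
proof -
  assume "c \<subseteq> P"
  then have "\<sigma> ` \<sigma> ` c = id ` c" unfolding image_comp using involution by (intro image_cong) auto
  then show ?thesis by simp
qed

lemma image_block_is_block:
  assumes "i < v" obtains j where "j < v" "bs!j = \<sigma> ` (bs!i)"
proof -
  have "\<sigma> ` (bs!i) \<in># image_mset ((`) \<sigma>) (mset bs)" using assms length_blocks by simp
  then have "\<sigma> ` (bs!i) \<in> set bs" using automorphism by simp
  then show ?thesis using that length_blocks by (auto simp: in_set_conv_nth)
qed

lemma not_separates_if_fixed: "c \<subseteq> P \<Longrightarrow> \<sigma> ` c = c \<Longrightarrow> y \<in> P \<Longrightarrow> \<not> separates y c"
  using mem_image_iff[of c y] unfolding separates_def by simp

lemma card_blocks_containing_not:
  assumes "a \<in> P" "b \<in> P" "a \<noteq> b"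
  shows "card {i\<in>{..<v}. a \<in> bs!i \<and> b \<notin> bs!i} = k - lam"
proof -
  have "{i\<in>{..<v}. a \<in> bs!i}
      = {i\<in>{..<v}. a \<in> bs!i \<and> b \<in> bs!i} \<union> {i\<in>{..<v}. a \<in> bs!i \<and> b \<notin> bs!i}"
    by auto
  also have "card \<dots>
      = card {i\<in>{..<v}. a \<in> bs!i \<and> b \<in> bs!i} + card {i\<in>{..<v}. a \<in> bs!i \<and> b \<notin> bs!i}"
    by (rule card_Un_disjoint) auto
  finally show ?thesis using replication_number[OF assms(1)] pair_count[OF assms] by simp
qed

lemma card_separating_blocks:
  assumes y: "y \<in> P" and "\<sigma> y \<noteq> y"
  shows "card {i\<in>{..<v}. separates y (bs!i)} = 2 * (k - lam)"
proof -
  have "{i\<in>{..<v}. separates y (bs!i)}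
      = {i\<in>{..<v}. y \<in> bs!i \<and> \<sigma> y \<notin> bs!i} \<union> {i\<in>{..<v}. \<sigma> y \<in> bs!i \<and> y \<notin> bs!i}"
    unfolding separates_def by auto
  also have "card \<dots> = card {i\<in>{..<v}. y \<in> bs!i \<and> \<sigma> y \<notin> bs!i} + card {i\<in>{..<v}. \<sigma> y \<in> bs!i \<and> y \<notin> bs!i}"
    by (rule card_Un_disjoint) auto
  finally show ?thesis
    using card_blocks_containing_not[OF y involution_closed[OF y]]
      card_blocks_containing_not[OF involution_closed[OF y] y] assms(2) by simp
qed

lemma card_separated_points:
  assumes "i \<in> moved_blocks"
  shows "card {y\<in>P. separates y (bs!i)} = 2 * (k - lam)"
proof -
  let ?c = "bs!i"
  have i: "i < v" and moved: "\<sigma> ` ?c \<noteq> ?c" using assms unfolding moved_blocks_def by auto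
  obtain j where j: "j < v" and c': "bs!j = \<sigma> ` ?c" using image_block_is_block[OF i] .
  let ?c' = "bs!j"
  have "i \<noteq> j" using moved c' by auto
  then have inter: "card (?c \<inter> ?c') = lam" using card_block_inter i j by blast
  have "{y\<in>P. separates y ?c} = (?c - ?c') \<union> (?c' - ?c)"
    using block_subset[OF i] block_subset[OF j] mem_image_iff[OF block_subset[OF i]] c'
    unfolding separates_def by auto
  moreover have "card (?c - ?c') = k - lam" "card (?c' - ?c) = k - lam"
    using inter i j card_block finite_block by (simp_all add: card_Diff_subset_Int Int_commute)
  ultimately show ?thesis using i j finite_block by (simp add: card_Un_disjoint disjoint_iff)
qed

lemma card_moved_blocks_eq_card_moved_points:
  assumes "lam < k"
  shows "card moved_blocks = card moved_points"
proof -
  have "(\<Sum>i<v. card {y\<in>P. separates y (bs!i)}) = (\<Sum>i<v. if i \<in> moved_blocks then 2 * (k - lam) else 0)"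
  proof (rule sum.cong)
    fix i assume i: "i \<in> {..<v}"
    show "card {y\<in>P. separates y (bs!i)} = (if i \<in> moved_blocks then 2 * (k - lam) else 0)"
    proof (cases "i \<in> moved_blocks")
      case False
      then have "{y\<in>P. separates y (bs!i)} = {}"
        using i not_separates_if_fixed block_subset unfolding moved_blocks_def by auto
      then show ?thesis using False by (metis card.empty)
    qed (simp add: card_separated_points)
  qed simp
  moreover have "(\<Sum>y\<in>P. card {i\<in>{..<v}. separates y (bs!i)})
      = (\<Sum>y\<in>P. if y \<in> moved_points then 2 * (k - lam) else 0)"
    using card_separating_blocks unfolding moved_points_def separates_def by (intro sum.cong) auto
  moreover have "(\<Sum>i<v. card {y\<in>P. separates y (bs!i)}) = (\<Sum>y\<in>P. card {i\<in>{..<v}. separates y (bs!i)})"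
    by (rule sum_card_filter_swap[symmetric]) (use finite_points in auto)
  ultimately have "card moved_blocks * (2 * (k - lam)) = card moved_points * (2 * (k - lam))"
    using finite_points by (simp add: sum_if_const_eq_card moved_blocks_def moved_points_def)
  then show ?thesis using assms by simp
qed

lemma incidence_difference_image:
  assumes "c \<subseteq> P" "y \<in> P"
  shows "incidence_difference y (\<sigma> ` c) = - incidence_difference y c"
  using mem_image_iff[OF assms] mem_image_iff[OF assms(1) involution_closed[OF assms(2)]]
    involution[OF assms(2)]
  unfolding incidence_difference_def by simp

lemma incidence_difference_nonzero_iff: "incidence_difference y c \<noteq> 0 \<longleftrightarrow> separates y c"
  unfolding incidence_difference_def separates_def by auto

lemma incidence_difference_orthogonal:
  assumes y: "y \<in> P" and y': "y' \<in> P" and "y' \<noteq> y" "y' \<noteq> \<sigma> y"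
  shows "(\<Sum>i<v. incidence_difference y (bs!i) * incidence_difference y' (bs!i)) = 0"
proof -
  let ?n = "\<lambda>a b. int (card {i\<in>{..<v}. a \<in> bs!i \<and> b \<in> bs!i})"
  have "y \<noteq> \<sigma> y'" "\<sigma> y \<noteq> \<sigma> y'" using assms involution by metis+
  then have "?n y y' = int lam" "?n y (\<sigma> y') = int lam" "?n (\<sigma> y) y' = int lam"
      "?n (\<sigma> y) (\<sigma> y') = int lam"
    using assms involution_closed pair_count by auto
  moreover have "(\<Sum>i<v. incidence_difference y (bs!i) * incidence_difference y' (bs!i))
      = ?n y y' - ?n y (\<sigma> y') - ?n (\<sigma> y) y' + ?n (\<sigma> y) (\<sigma> y')"
    by (simp add: incidence_difference_def algebra_simps sum.distrib sum_subtractf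
        of_bool_conj[symmetric] Int_def conj_commute)
  ultimately show ?thesis by simp
qed

lemma even_card_negative_products:
  assumes y: "y \<in> P" and y': "y' \<in> P"
  shows "even (card {i\<in>{..<v}. incidence_difference y (bs!i) * incidence_difference y' (bs!i) = -1})"
proof -
  define Q where "Q c \<longleftrightarrow> incidence_difference y c * incidence_difference y' c = -1" for c
  define M where "M = filter_mset Q (mset bs)"
  have sub: "c \<subseteq> P" if "c \<in># mset bs" for c
    using that block_subset length_blocks by (metis in_set_conv_nth set_mset_mset)
  have Q_image: "filter_mset (\<lambda>c. Q (\<sigma> ` c)) (mset bs) = M"
    unfolding M_def Q_def
    by (rule filter_mset_cong0) (simp add: incidence_difference_image sub y y')
  have "image_mset ((`) \<sigma>) M = image_mset ((`) \<sigma>) (filter_mset (\<lambda>c. Q (\<sigma> ` c)) (mset bs))"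
    by (simp only: Q_image)
  also have "\<dots> = filter_mset Q (image_mset ((`) \<sigma>) (mset bs))"
    by (rule image_mset_filter_mset_swap)
  also have "\<dots> = M" unfolding M_def automorphism ..
  finally have "image_mset ((`) \<sigma>) M = M" .
  moreover have "\<sigma> ` c \<noteq> c" if "c \<in># M" for c
  proof
    assume "\<sigma> ` c = c"
    then have "incidence_difference y c = 0"
      using incidence_difference_image[OF sub y, of c] that unfolding M_def by simp
    then show False using that unfolding M_def Q_def by simp
  qed
  moreover have "\<sigma> ` \<sigma> ` c = c" if "c \<in># M" for c
    using image_image_involution sub that unfolding M_def by simp
  ultimately have "even (size M)" by (simp add: even_size_mset_if_fixpoint_free_involution)
  moreover have "size M = card {i. i < length bs \<and> Q (bs!i)}"
    unfolding M_def by (simp flip: mset_filter add: length_filter_conv_card)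
  moreover have "{i. i < length bs \<and> Q (bs!i)} = {i\<in>{..<v}. Q (bs!i)}"
    using length_blocks by auto
  ultimately show ?thesis unfolding Q_def by simp
qed

lemma four_dvd_card_common_separating:
  assumes "y \<in> P" "y' \<in> P" "y' \<noteq> y" "y' \<noteq> \<sigma> y"
  shows "4 dvd card {i\<in>{..<v}. separates y (bs!i) \<and> separates y' (bs!i)}"
proof -
  let ?g = "\<lambda>i. incidence_difference y (bs!i) * incidence_difference y' (bs!i)"
  have "\<forall>i\<in>{..<v}. ?g i \<in> {-1, 0, 1}" by (simp add: incidence_difference_def)
  then have "card {i\<in>{..<v}. ?g i \<noteq> 0} = 2 * card {i\<in>{..<v}. ?g i = -1}"
    using incidence_difference_orthogonal[OF assms] by (intro card_nonzero_eq_twice_card_neg) simp_all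
  moreover have "{i\<in>{..<v}. ?g i \<noteq> 0} = {i\<in>{..<v}. separates y (bs!i) \<and> separates y' (bs!i)}"
    by (simp add: incidence_difference_nonzero_iff[symmetric])
  moreover obtain m where "card {i\<in>{..<v}. ?g i = -1} = 2 * m"
    using even_card_negative_products[OF assms(1,2)] by blast
  ultimately show ?thesis by simp
qed

lemma separating_imp_moved_point: "separates y c \<Longrightarrow> y \<in> P \<Longrightarrow> y \<in> moved_points"
  unfolding separates_def moved_points_def by auto

lemma separating_imp_moved_block:
  assumes "i < v" "y \<in> P" "separates y (bs!i)"
  shows "i \<in> moved_blocks"
  using assms not_separates_if_fixed[OF block_subset[OF assms(1)] _ assms(2)]
  unfolding moved_blocks_def by auto

lemma moved_point_image: "y \<in> moved_points \<Longrightarrow> \<sigma> y \<in> moved_points \<and> \<sigma> y \<noteq> y"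
  using involution involution_closed unfolding moved_points_def by auto

lemma finite_moved_points: "finite moved_points"
  using finite_points unfolding moved_points_def by simp

definition unseparated_blocks :: "'a \<Rightarrow> nat set" where
  "unseparated_blocks y = {i\<in>moved_blocks. \<not> separates y (bs!i)}"

lemma finite_moved_blocks: "finite moved_blocks"
  unfolding moved_blocks_def by simp

lemma unseparated_blocks_image: "y \<in> P \<Longrightarrow> unseparated_blocks (\<sigma> y) = unseparated_blocks y"
  using involution unfolding unseparated_blocks_def separates_def by auto

lemma card_unseparated_blocks:
  assumes y: "y \<in> moved_points"
  shows "card (unseparated_blocks y) + 2 * (k - lam) = card moved_blocks"
proof -
  have yP: "y \<in> P" "\<sigma> y \<noteq> y" using y unfolding moved_points_def by auto
  have "moved_blocks = unseparated_blocks y \<union> {i\<in>{..<v}. separates y (bs!i)}"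
    using separating_imp_moved_block[OF _ yP(1)] unfolding unseparated_blocks_def moved_blocks_def by auto
  also have "card \<dots> = card (unseparated_blocks y) + card {i\<in>{..<v}. separates y (bs!i)}"
    by (rule card_Un_disjoint) (use finite_moved_blocks in \<open>auto simp: unseparated_blocks_def\<close>)
  finally show ?thesis using card_separating_blocks[OF yP] by simp
qed

lemma card_unseparating_moved_points:
  assumes i: "i \<in> moved_blocks"
  shows "card {y\<in>moved_points. i \<in> unseparated_blocks y} + 2 * (k - lam) = card moved_points"
proof -
  have sub: "{y\<in>P. separates y (bs!i)} \<subseteq> moved_points"
    using separating_imp_moved_point by blast
  have "{y\<in>moved_points. i \<in> unseparated_blocks y} = moved_points - {y\<in>P. separates y (bs!i)}"
    using i unfolding unseparated_blocks_def moved_points_def by auto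
  then show ?thesis
    using card_Diff_subset[OF finite_subset[OF sub finite_moved_points] sub]
      card_mono[OF finite_moved_points sub] card_separated_points[OF i] by simp
qed

lemma card_common_separating_add_card_unseparated:
  assumes "y \<in> P" "y' \<in> P"
  shows "card {i\<in>{..<v}. separates y (bs!i) \<and> separates y' (bs!i)}
    + card (unseparated_blocks y \<union> unseparated_blocks y') = card moved_blocks"
proof -
  let ?S = "{i\<in>{..<v}. separates y (bs!i) \<and> separates y' (bs!i)}"
  have "moved_blocks = ?S \<union> (unseparated_blocks y \<union> unseparated_blocks y')"
    using separating_imp_moved_block[OF _ assms(1)] unfolding unseparated_blocks_def moved_blocks_def
    by auto
  also have "card \<dots> = card ?S + card (unseparated_blocks y \<union> unseparated_blocks y')"
    by (rule card_Un_disjoint) (use finite_moved_blocks in \<open>auto simp: unseparated_blocks_def\<close>)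
  finally show ?thesis by simp
qed

lemma card_fixed_points_add_moved: "card {x\<in>P. \<sigma> x = x} + card moved_points = v"
proof -
  have "card ({x\<in>P. \<sigma> x = x} \<union> moved_points) = card {x\<in>P. \<sigma> x = x} + card moved_points"
    by (rule card_Un_disjoint) (use finite_points in \<open>auto simp: moved_points_def\<close>)
  moreover have "{x\<in>P. \<sigma> x = x} \<union> moved_points = P" unfolding moved_points_def by auto
  ultimately show ?thesis using card_points by simp
qed

lemma obtain_unrelated_moved_point:
  assumes "2 < card moved_points" "y \<in> moved_points"
  obtains y' where "y' \<in> moved_points" "y' \<noteq> y" "y' \<noteq> \<sigma> y"
proof -
  have "\<not> moved_points \<subseteq> {y, \<sigma> y}"
  proof
    assume "moved_points \<subseteq> {y, \<sigma> y}"
    then have "card moved_points \<le> card {y, \<sigma> y}" by (simp add: card_mono)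
    also have "\<dots> \<le> 2" by (simp add: card_insert_le_m1)
    finally show False using assms by simp
  qed
  then show ?thesis using that by blast
qed

lemma card_moved_points_ne_twice_diff:
  assumes odd: "odd (k - lam)" and "1 < k - lam"
  shows "card moved_points \<noteq> 2 * (k - lam)"
proof
  assume card_moved: "card moved_points = 2 * (k - lam)"
  have "lam < k" using odd by (rule contrapos_np) simp
  then have card_blocks: "card moved_blocks = 2 * (k - lam)"
    using card_moved_blocks_eq_card_moved_points card_moved by simp
  have no_unseparated: "unseparated_blocks y = {}" if "y \<in> moved_points" for y
    using card_unseparated_blocks[OF that] card_blocks finite_moved_blocks
    unfolding unseparated_blocks_def by simp
  have "moved_points \<noteq> {}" using card_moved assms by auto
  then obtain y where y: "y \<in> moved_points" by blast
  obtain y' where y': "y' \<in> moved_points" "y' \<noteq> y" "y' \<noteq> \<sigma> y"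
    using obtain_unrelated_moved_point[OF _ y] card_moved assms by auto
  have yP: "y \<in> P" "y' \<in> P" using y y' unfolding moved_points_def by auto
  have "card {i\<in>{..<v}. separates y (bs!i) \<and> separates y' (bs!i)} = 2 * (k - lam)"
    using card_common_separating_add_card_unseparated[OF yP] no_unseparated y y'(1) card_blocks
    by simp
  then have "4 dvd 2 * (k - lam)" using four_dvd_card_common_separating[OF yP y'(2,3)] by simp
  then show False using odd by presburger
qed

context
  assumes odd: "odd (k - lam)" and card_moved: "card moved_points = 2 * (k - lam) + 4"
begin

lemma card_moved_blocks_eq_twice_diff_plus_4: "card moved_blocks = 2 * (k - lam) + 4"
proof -
  have "lam < k" using odd by (rule contrapos_np) simp
  then show ?thesis using card_moved_blocks_eq_card_moved_points card_moved by simp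
qed

lemma card_unseparated_blocks_eq_4: "y \<in> moved_points \<Longrightarrow> card (unseparated_blocks y) = 4"
  using card_unseparated_blocks card_moved_blocks_eq_twice_diff_plus_4 by fastforce

lemma card_unseparated_blocks_inter:
  assumes y: "y \<in> moved_points" and y': "y' \<in> moved_points" and "y' \<noteq> y" "y' \<noteq> \<sigma> y"
  shows "card (unseparated_blocks y \<inter> unseparated_blocks y') = 2"
proof -
  have yP: "y \<in> P" "y' \<in> P" using y y' unfolding moved_points_def by auto
  have fin: "finite (unseparated_blocks y)" "finite (unseparated_blocks y')"
    using finite_moved_blocks unfolding unseparated_blocks_def by auto
  have "card (unseparated_blocks y \<union> unseparated_blocks y')
      + card (unseparated_blocks y \<inter> unseparated_blocks y') = 8"
    using card_Un_Int[OF fin] card_unseparated_blocks_eq_4 y y' by simp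
  moreover have "card (unseparated_blocks y \<inter> unseparated_blocks y') \<le> 4"
    using card_mono[OF fin(1), of "unseparated_blocks y \<inter> unseparated_blocks y'"]
      card_unseparated_blocks_eq_4[OF y] by simp
  moreover note card_common_separating_add_card_unseparated[OF yP]
    four_dvd_card_common_separating[OF yP assms(3,4)]
  ultimately show ?thesis using odd card_moved_blocks_eq_twice_diff_plus_4 by presburger
qed

lemma sum_card_unseparated_blocks_inter:
  assumes y: "y \<in> moved_points"
  shows "(\<Sum>y'\<in>moved_points. card (unseparated_blocks y \<inter> unseparated_blocks y'))
    = 2 * card moved_points + 4"
proof -
  have "(\<Sum>y'\<in>moved_points. card (unseparated_blocks y \<inter> unseparated_blocks y'))
      = (\<Sum>y'\<in>moved_points. 2 + (if y' \<in> {y, \<sigma> y} then 2 else 0))"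
  proof (rule sum.cong)
    fix y' assume "y' \<in> moved_points"
    then show "card (unseparated_blocks y \<inter> unseparated_blocks y') = 2 + (if y' \<in> {y, \<sigma> y} then 2 else 0)"
      using card_unseparated_blocks_eq_4[OF y] unseparated_blocks_image y card_unseparated_blocks_inter[OF y]
      unfolding moved_points_def by auto
  qed simp
  also have "\<dots> = 2 * card moved_points + card {y'\<in>moved_points. y' \<in> {y, \<sigma> y}} * 2"
    unfolding sum.distrib sum_if_const_eq_card[OF finite_moved_points] by simp
  also have "{y'\<in>moved_points. y' \<in> {y, \<sigma> y}} = {y, \<sigma> y}"
    using y moved_point_image by auto
  finally show ?thesis using moved_point_image[OF y] by (auto simp: card_insert_if)
qed

end

lemma card_moved_points_ne_twice_diff_plus_4:
  assumes odd: "odd (k - lam)" and "1 < k - lam"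
  shows "card moved_points \<noteq> 2 * (k - lam) + 4"
proof
  define n where "n = 2 * (k - lam) + 4"
  assume card_moved: "card moved_points = n"
  note card_moved' = card_moved[unfolded n_def]
  have "n * (2 * n + 4)
      = (\<Sum>y\<in>moved_points. \<Sum>y'\<in>moved_points. card (unseparated_blocks y \<inter> unseparated_blocks y'))"
    using sum_card_unseparated_blocks_inter[OF odd card_moved'] card_moved by simp
  also have "\<dots> = (\<Sum>i\<in>moved_blocks. (card {y\<in>moved_points. i \<in> unseparated_blocks y})\<^sup>2)"
    by (rule sum_sum_card_inter_eq_sum_square)
      (use finite_moved_points finite_moved_blocks in \<open>auto simp: unseparated_blocks_def\<close>)
  also have "\<dots> = n * 16"
    using card_unseparating_moved_points card_moved card_moved_blocks_eq_twice_diff_plus_4[OF odd card_moved']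
    by (simp add: n_def)
  finally have "n * (2 * n + 4) = n * 16" .
  then have "2 * n + 4 = 16" unfolding mult_cancel1 n_def by simp
  then show False using assms unfolding n_def by simp
qed

end

lemma indexed_design_involution_if_automorphism:
  assumes design: "symmetric_design P B v k lam" and "2 \<le> k"
    and aut: "design_automorphism P B \<sigma>" and inv: "\<forall>x\<in>P. \<sigma> (\<sigma> x) = x"
    and bs: "mset bs = B"
  shows "indexed_design_involution P bs v k lam \<sigma>"
proof unfold_locales
  note design' = design[unfolded symmetric_design_def]
  show "finite P" "card P = v" using design' by auto
  show length: "length bs = v" using design' bs by (metis size_mset)
  have block: "bs!i \<in># B" if "i < v" for i using that bs length by (metis nth_mem set_mset_mset)
  show "bs!i \<subseteq> P" "card (bs!i) = k" if "i < v" for i using design' block[OF that] by auto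
  show "2 \<le> k" by fact
  show "\<sigma> x \<in> P" if "x \<in> P" for x using aut that unfolding design_automorphism_def bij_betw_def by auto
  show "\<sigma> (\<sigma> x) = x" if "x \<in> P" for x using inv that by blast
  show "image_mset ((`) \<sigma>) (mset bs) = mset bs" using aut bs unfolding design_automorphism_def by simp
  fix x y assume "x \<in> P" "y \<in> P" "x \<noteq> y"
  then have "size (filter_mset (\<lambda>b. x \<in> b \<and> y \<in> b) B) = lam" using design' by blast
  then show "card {i\<in>{..<v}. x \<in> bs!i \<and> y \<in> bs!i} = lam"
    using length by (simp flip: bs mset_filter add: length_filter_conv_card lessThan_def Collect_conj_eq[symmetric])
qed

theorem mainTheorem2:
  fixes P :: "'a set" and B :: "'a set multiset" and \<sigma> :: "'a \<Rightarrow> 'a"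
  assumes "symmetric_design P B 36 15 6"
    and "design_automorphism P B \<sigma>"
    and "order_two_on P \<sigma>"
  shows "card {x \<in> P. \<sigma> x = x} \<noteq> 18 \<and> card {x \<in> P. \<sigma> x = x} \<noteq> 14"
proof -
  obtain bs where "mset bs = B" using ex_mset by blast
  then interpret indexed_design_involution P bs 36 15 6 \<sigma>
    using assms by (intro indexed_design_involution_if_automorphism) (auto simp: order_two_on_def)
  have "card moved_points \<noteq> 18" "card moved_points \<noteq> 22"
    using card_moved_points_ne_twice_diff card_moved_points_ne_twice_diff_plus_4 by simp_all
  then show ?thesis using card_fixed_points_add_moved by auto
qed

end
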